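(* Let $n\ge 2$. Then there exists a non-convex domain $D\subset\mathbb{C}^n$ such that $A(D)$ is pseudoconvex for every real isometry $A$ of $\mathbb{C}^n=\mathbb{R}^{2n}$. *)

theory Defs
  imports "HOL-Analysis.Analysis"
begin

text \<open>Complex n-space is modelled as \<open>complex ^ 'n\<close>; its norm is the Euclidean
norm of \<open>\<real>\<^sup>2\<^sup>n\<close>.\<close>

definition domain :: "'a::topological_space set \<Rightarrow> bool" where
  "domain D \<longleftrightarrow> open D \<and> connected D \<and> D \<noteq> {}"

text \<open>Continuous plurisubharmonic function on an open set D: continuous and
subharmonic (sub-mean-value property) on every complex line, i.e. for every closed
analytic disc a + \<zeta> b, |\<zeta>| \<le> 1, contained in D.\<close>
definition cont_psh :: "(complex ^ 'n) set \<Rightarrow> (complex ^ 'n \<Rightarrow> real) \<Rightarrow> bool" where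
  "cont_psh D u \<longleftrightarrow> continuous_on D u \<and>
     (\<forall>a b. (\<forall>\<zeta>::complex. norm \<zeta> \<le> 1 \<longrightarrow> a + \<zeta> *s b \<in> D) \<longrightarrow>
        u a \<le> (1 / (2 * pi)) * integral {0..2*pi} (\<lambda>t. u (a + cis t *s b)))"

text \<open>Pseudoconvexity (Hartogs/Oka): D is open and admits a continuous
plurisubharmonic exhaustion function.\<close>
definition pseudoconvex :: "(complex ^ 'n) set \<Rightarrow> bool" where
  "pseudoconvex D \<longleftrightarrow> open D \<and>
     (\<exists>\<phi>. cont_psh D \<phi> \<and> (\<forall>c::real. compact {z \<in> D. \<phi> z \<le> c}))"

end

theory Submission
  imports Defs
begin

text \<open>Fix a unit vector \<open>e\<close> and let \<open>q x = |x|\<^sup>2 - 2 (x \<bullet> e)\<^sup>2\<close>. The domain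
\<open>D = {q < 1}\<close>, bounded by a hyperboloid of one sheet, is star-shaped but not convex, and
\<open>\<phi> = |x|\<^sup>2 + 1 / (1 - q)\<close> is an exhaustion of \<open>D\<close> defined purely in terms of the real
Euclidean structure, so \<open>\<phi> \<circ> A\<^sup>-\<^sup>1\<close> exhausts \<open>A(D)\<close> for every real isometry \<open>A\<close>.
A real isometry maps a complex circle \<open>a + e\<^sup>i\<^sup>t b\<close> to a round circle in a real 2-plane,
whose points at quarter turns form a cross \<open>p \<plusminus> w\<^sub>0, p \<plusminus> w\<^sub>1\<close> with \<open>w\<^sub>0 \<perp> w\<^sub>1\<close>
and \<open>|w\<^sub>0| = |w\<^sub>1|\<close>. Since \<open>q\<close> has the single negative eigenvalue \<open>-1\<close>, Bessel's
inequality gives \<open>q w\<^sub>0 + q w\<^sub>1 \<ge> 0\<close>, so \<open>q\<close> averages to at least \<open>q p\<close> over the cross;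
as \<open>s \<mapsto> 1 / (1 - s)\<close> is convex and increasing, \<open>\<phi>\<close> satisfies the four-point
sub-mean-value inequality, and averaging it over the circle gives plurisubharmonicity.\<close>

definition hyperbolic_form :: "'a::real_inner \<Rightarrow> 'a \<Rightarrow> real" where
  "hyperbolic_form e x = (norm x)\<^sup>2 - 2 * (x \<bullet> e)\<^sup>2"

definition hyperbolic_exhaustion :: "'a::real_inner \<Rightarrow> 'a \<Rightarrow> real" where
  "hyperbolic_exhaustion e x = (norm x)\<^sup>2 + 1 / (1 - hyperbolic_form e x)"

definition four_point_subharmonic :: "'a::real_inner set \<Rightarrow> ('a \<Rightarrow> real) \<Rightarrow> bool" where
  "four_point_subharmonic D \<phi> \<longleftrightarrow>
     (\<forall>p v w. v \<bullet> w = 0 \<and> norm v = norm w \<and>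
        p + v \<in> D \<and> p - v \<in> D \<and> p + w \<in> D \<and> p - w \<in> D \<longrightarrow>
        4 * \<phi> p \<le> \<phi> (p + v) + \<phi> (p - v) + \<phi> (p + w) + \<phi> (p - w))"

lemma power2_norm_add: "(norm (x + y))\<^sup>2 = (norm x)\<^sup>2 + (norm y)\<^sup>2 + 2 * (x \<bullet> y)"
  for x y :: "'a::real_inner"
  by (simp add: power2_norm_eq_inner inner_add_left inner_add_right inner_commute)

lemma power2_norm_diff: "(norm (x - y))\<^sup>2 = (norm x)\<^sup>2 + (norm y)\<^sup>2 - 2 * (x \<bullet> y)"
  for x y :: "'a::real_inner"
  by (simp add: power2_norm_eq_inner inner_diff_left inner_diff_right inner_commute)

lemma hyperbolic_form_scaleR: "hyperbolic_form e (t *\<^sub>R x) = t\<^sup>2 * hyperbolic_form e x"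
  by (simp add: hyperbolic_form_def power_mult_distrib algebra_simps)

lemma hyperbolic_form_parallelogram:
  "hyperbolic_form e (p + w) + hyperbolic_form e (p - w) = 2 * hyperbolic_form e p + 2 * hyperbolic_form e w"
  unfolding hyperbolic_form_def power2_norm_add power2_norm_diff
  by (simp add: inner_add_left inner_diff_left power2_eq_square algebra_simps)

lemma orthogonal_pair_inner_squares_le:
  fixes w0 w1 e :: "'a::real_inner"
  assumes "w0 \<bullet> w1 = 0" "norm w0 = norm w1" "norm e = 1"
  shows "(w0 \<bullet> e)\<^sup>2 + (w1 \<bullet> e)\<^sup>2 \<le> (norm w0)\<^sup>2"
proof -
  define s where "s = w0 \<bullet> e"
  define t where "t = w1 \<bullet> e"
  define y where "y = s *\<^sub>R w0 + t *\<^sub>R w1"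
  have ye: "y \<bullet> e = s\<^sup>2 + t\<^sup>2"
    by (simp add: y_def s_def t_def inner_add_left power2_eq_square)
  have yy: "(norm y)\<^sup>2 = (s\<^sup>2 + t\<^sup>2) * (norm w0)\<^sup>2"
    using assms(1,2) by (simp add: y_def power2_norm_add power_mult_distrib inner_commute algebra_simps)
  have "(y \<bullet> e)\<^sup>2 \<le> (norm y)\<^sup>2"
    using Cauchy_Schwarz_ineq[of y e] assms(3) by (simp add: power2_norm_eq_inner[symmetric] power2_eq_square)
  then have "(s\<^sup>2 + t\<^sup>2) * (s\<^sup>2 + t\<^sup>2) \<le> (s\<^sup>2 + t\<^sup>2) * (norm w0)\<^sup>2"
    unfolding ye yy by (simp only: power2_eq_square[of "s\<^sup>2 + t\<^sup>2"])
  moreover have "0 \<le> s\<^sup>2 + t\<^sup>2" by simp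
  ultimately show ?thesis
    unfolding s_def t_def by (metis mult_le_cancel_left order.order_iff_strict zero_le_power2)
qed

lemma hyperbolic_form_orthogonal_pair_nonneg:
  assumes "w0 \<bullet> w1 = 0" "norm w0 = norm w1" "norm e = 1"
  shows "0 \<le> hyperbolic_form e w0 + hyperbolic_form e w1"
  using orthogonal_pair_inner_squares_le[OF assms] assms(2) by (simp add: hyperbolic_form_def)

lemma inverse_sum_midpoint_le: "4 / (x + y) \<le> 1 / x + 1 / y" if "0 < x" "0 < y" for x y :: real
proof -
  have "4 * x * y \<le> (x + y) * (x + y)"
    using zero_le_power2[of "x - y"] by (simp add: power2_eq_square algebra_simps)
  with that show ?thesis by (simp add: field_simps)
qed

lemma inverse_one_minus_midpoint_convex:
  fixes a b :: real assumes "a < 1" "b < 1"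
  shows "2 / (1 - (a + b) / 2) \<le> 1 / (1 - a) + 1 / (1 - b)"
proof -
  have "2 / (1 - (a + b) / 2) = 4 / ((1 - a) + (1 - b))" by (simp add: field_simps)
  with inverse_sum_midpoint_le[of "1 - a" "1 - b"] assms show ?thesis by simp
qed

lemma four_point_subharmonic_hyperbolic_exhaustion:
  assumes "norm e = 1"
  shows "four_point_subharmonic {x. hyperbolic_form e x < 1} (hyperbolic_exhaustion e)"
  unfolding four_point_subharmonic_def
proof (intro allI impI, elim conjE)
  fix p w0 w1 :: 'a
  let ?q = "hyperbolic_form e" and ?g = "\<lambda>s::real. 1 / (1 - s)"
  assume orth: "w0 \<bullet> w1 = 0" and eq: "norm w0 = norm w1"
    and D: "p + w0 \<in> {x. ?q x < 1}" "p - w0 \<in> {x. ?q x < 1}"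
      "p + w1 \<in> {x. ?q x < 1}" "p - w1 \<in> {x. ?q x < 1}"
  define m0 where "m0 = (?q (p + w0) + ?q (p - w0)) / 2"
  define m1 where "m1 = (?q (p + w1) + ?q (p - w1)) / 2"
  have m: "m0 < 1" "m1 < 1" using D by (auto simp: m0_def m1_def)
  have "m0 = ?q p + ?q w0" "m1 = ?q p + ?q w1"
    unfolding m0_def m1_def hyperbolic_form_parallelogram by simp_all
  then have "?q p \<le> (m0 + m1) / 2"
    using hyperbolic_form_orthogonal_pair_nonneg[OF orth eq assms] by simp
  then have "4 * ?g (?q p) \<le> 4 * ?g ((m0 + m1) / 2)"
    using m by (simp add: frac_le)
  also have "\<dots> \<le> 2 * ?g m0 + 2 * ?g m1"
    using inverse_one_minus_midpoint_convex[OF m] by simp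
  also have "\<dots> \<le> ?g (?q (p + w0)) + ?g (?q (p - w0)) + ?g (?q (p + w1)) + ?g (?q (p - w1))"
    using inverse_one_minus_midpoint_convex[of "?q (p + w0)" "?q (p - w0)"]
      inverse_one_minus_midpoint_convex[of "?q (p + w1)" "?q (p - w1)"] D
    by (simp add: m0_def m1_def)
  finally show "4 * hyperbolic_exhaustion e p \<le> hyperbolic_exhaustion e (p + w0) +
      hyperbolic_exhaustion e (p - w0) + hyperbolic_exhaustion e (p + w1) + hyperbolic_exhaustion e (p - w1)"
    unfolding hyperbolic_exhaustion_def power2_norm_add power2_norm_diff
    using zero_le_power2[of "norm w0"] zero_le_power2[of "norm w1"] by argo
qed

lemma continuous_on_hyperbolic_form [continuous_intros]: "continuous_on S (hyperbolic_form e)"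
  unfolding hyperbolic_form_def by (intro continuous_intros)

lemma open_hyperbolic_domain: "open {x. hyperbolic_form e x < 1}"
  by (intro open_Collect_less continuous_intros)

lemma connected_hyperbolic_domain: "connected {x. hyperbolic_form e x < 1}"
proof (rule starlike_imp_connected)
  show "starlike {x. hyperbolic_form e x < 1}"
    unfolding starlike_def
  proof (intro bexI ballI subsetI)
    show "0 \<in> {x. hyperbolic_form e x < 1}" by (simp add: hyperbolic_form_def)
    fix x y assume x: "x \<in> {x. hyperbolic_form e x < 1}" and "y \<in> closed_segment 0 x"
    then obtain t where t: "0 \<le> t" "t \<le> 1" "y = t *\<^sub>R x" by (auto simp: closed_segment_def)
    have "t\<^sup>2 \<le> 1" using t by (simp add: power_le_one)
    then have "t\<^sup>2 * hyperbolic_form e x < 1"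
      using x by (smt (verit) mem_Collect_eq mult_left_le_one_le mult_nonneg_nonpos zero_le_power2)
    then show "y \<in> {x. hyperbolic_form e x < 1}" by (simp add: t(3) hyperbolic_form_scaleR)
  qed
qed

text \<open>The points \<open>2f \<plusminus> 2e\<close> lie on the cone \<open>hyperbolic_form e = 0\<close>, while their midpoint
\<open>2f\<close> has \<open>hyperbolic_form e (2f) = 4\<close>.\<close>
lemma not_convex_hyperbolic_domain:
  assumes "norm e = 1" "norm f = 1" "e \<bullet> f = 0"
  shows "\<not> convex {x. hyperbolic_form e x < 1}"
proof
  have ee: "e \<bullet> e = 1" using assms(1) by (simp add: power2_norm_eq_inner[symmetric])
  have q: "hyperbolic_form e (2 *\<^sub>R f + s *\<^sub>R e) = 4 - s\<^sup>2" for s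
  proof -
    have "(2 *\<^sub>R f + s *\<^sub>R e) \<bullet> e = s"
      using assms(3) ee by (simp add: inner_add_left inner_commute[of f e])
    moreover have "(norm (2 *\<^sub>R f + s *\<^sub>R e))\<^sup>2 = 4 + s\<^sup>2"
      using assms by (simp add: power2_norm_add inner_commute power_mult_distrib)
    ultimately show ?thesis by (simp add: hyperbolic_form_def)
  qed
  have mid: "(1/2) *\<^sub>R (2 *\<^sub>R f + 2 *\<^sub>R e) + (1/2) *\<^sub>R (2 *\<^sub>R f - 2 *\<^sub>R e) = 2 *\<^sub>R f"
    by (simp add: scaleR_add_right scaleR_diff_right) (simp add: scaleR_2)
  assume "convex {x. hyperbolic_form e x < 1}"
  moreover have "2 *\<^sub>R f + 2 *\<^sub>R e \<in> {x. hyperbolic_form e x < 1}"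
    "2 *\<^sub>R f - 2 *\<^sub>R e \<in> {x. hyperbolic_form e x < 1}"
    using q[of 2] q[of "-2"] by simp_all
  ultimately have "(1/2) *\<^sub>R (2 *\<^sub>R f + 2 *\<^sub>R e) + (1/2) *\<^sub>R (2 *\<^sub>R f - 2 *\<^sub>R e)
      \<in> {x. hyperbolic_form e x < 1}"
    by (rule convexD) simp_all
  then have "2 *\<^sub>R f \<in> {x. hyperbolic_form e x < 1}" by (simp only: mid)
  with q[of 0] show False by simp
qed

lemma continuous_on_hyperbolic_exhaustion:
  "continuous_on {x. hyperbolic_form e x < 1} (hyperbolic_exhaustion e)"
  unfolding hyperbolic_exhaustion_def by (intro continuous_intros) auto

lemma compact_sublevel_hyperbolic_exhaustion:
  fixes e :: "'a::euclidean_space"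
  shows "compact {x \<in> {x. hyperbolic_form e x < 1}. hyperbolic_exhaustion e x \<le> c}"
proof -
  have "{x \<in> {x. hyperbolic_form e x < 1}. hyperbolic_exhaustion e x \<le> c} =
      {x. (norm x)\<^sup>2 \<le> c \<and> 1 \<le> (c - (norm x)\<^sup>2) * (1 - hyperbolic_form e x)}"
  proof (intro set_eqI iffI; simp only: mem_Collect_eq; elim conjE)
    fix x
    assume "hyperbolic_form e x < 1" "hyperbolic_exhaustion e x \<le> c"
    then have pos: "0 < 1 - hyperbolic_form e x"
      and le: "1 / (1 - hyperbolic_form e x) \<le> c - (norm x)\<^sup>2"
      by (simp_all add: hyperbolic_exhaustion_def)
    show "(norm x)\<^sup>2 \<le> c \<and> 1 \<le> (c - (norm x)\<^sup>2) * (1 - hyperbolic_form e x)"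
    proof
      show "(norm x)\<^sup>2 \<le> c" using le pos by (smt (verit) divide_pos_pos)
      show "1 \<le> (c - (norm x)\<^sup>2) * (1 - hyperbolic_form e x)" using le pos by (simp add: pos_divide_le_eq)
    qed
  next
    fix x
    assume "(norm x)\<^sup>2 \<le> c" and le: "1 \<le> (c - (norm x)\<^sup>2) * (1 - hyperbolic_form e x)"
    then have "hyperbolic_form e x < 1"
      by (smt (verit) mult_nonneg_nonpos)
    with le show "hyperbolic_form e x < 1 \<and> hyperbolic_exhaustion e x \<le> c"
      by (simp add: hyperbolic_exhaustion_def field_simps)
  qed
  moreover have "closed {x. (norm x)\<^sup>2 \<le> c \<and> 1 \<le> (c - (norm x)\<^sup>2) * (1 - hyperbolic_form e x)}"
    by (intro closed_Collect_conj closed_Collect_le continuous_intros)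
  moreover have "{x. (norm x)\<^sup>2 \<le> c \<and> 1 \<le> (c - (norm x)\<^sup>2) * (1 - hyperbolic_form e x)} \<subseteq> cball 0 (sqrt c)"
    by (auto intro: real_le_rsqrt)
  ultimately show ?thesis
    by (metis bounded_cball bounded_subset compact_eq_bounded_closed)
qed

lemma norm_vector_smult_complex: "norm (c *s v) = norm c * norm v"
  for v :: "complex ^ 'n"
  by (simp add: norm_vec_def L2_set_def norm_mult power_mult_distrib sum_distrib_left[symmetric] real_sqrt_mult)

lemma inner_vector_smult_ii: "v \<bullet> (\<i> *s v) = 0"
  for v :: "complex ^ 'n"
  by (simp add: inner_vec_def inner_complex_def)

lemma continuous_on_cis_vector_smult: "continuous_on S (\<lambda>t. a + cis t *s (b :: complex ^ 'n))"
  unfolding vector_scalar_mult_def by (intro continuous_intros)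

lemma cis_add_pi_half: "cis (t + pi/2) = \<i> * cis t"
  by (simp add: complex_eq_iff cos_add sin_add)

lemma cis_add_pi: "cis (t + pi) = - cis t"
  by (simp add: complex_eq_iff cos_add sin_add)

lemma cis_add_three_pi_half: "cis (t + 3*pi/2) = - (\<i> * cis t)"
  using cis_add_pi[of "t + pi/2"] by (simp add: cis_add_pi_half algebra_simps)

lemma integral_Icc_sum_shifts:
  fixes f :: "real \<Rightarrow> real"
  assumes f: "continuous_on UNIV f" and h: "0 \<le> h"
  shows "integral {0..real n * h} f = integral {0..h} (\<lambda>t. \<Sum>k<n. f (t + real k * h))"
proof (induction n)
  case 0
  show ?case by simp
next
  case (Suc n)
  have shift: "continuous_on S (\<lambda>t. f (t + c))" for S c
    by (rule continuous_on_compose2[OF f]) (auto intro: continuous_intros)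
  have "integral {0..real (Suc n) * h} f =
      integral {0..real n * h} f + integral {real n * h..real n * h + h} f"
    using Henstock_Kurzweil_Integration.integral_combine
        [where a=0 and c="real n * h" and b="real n * h + h" and f=f]
      h integrable_continuous_interval[OF continuous_on_subset[OF f]]
    by (simp add: algebra_simps)
  also have "integral {real n * h..real n * h + h} f = integral {0..h} (\<lambda>t. f (t + real n * h))"
    using integral_shift_Icc_real[of 0 h f "real n * h"] by (simp add: o_def add.commute)
  also note Suc.IH
  also have "integral {0..h} (\<lambda>t. \<Sum>k<n. f (t + real k * h)) + integral {0..h} (\<lambda>t. f (t + real n * h))
      = integral {0..h} (\<lambda>t. \<Sum>k<Suc n. f (t + real k * h))"
    by (simp add: integral_add integrable_continuous_interval continuous_on_sum shift)
  finally show ?case .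
qed

lemma mean_value_ge_if_quarter_sums:
  fixes f :: "real \<Rightarrow> real"
  assumes f: "continuous_on UNIV f"
    and quarters: "\<And>t. 4 * c \<le> f t + f (t + pi/2) + f (t + pi) + f (t + 3*pi/2)"
  shows "c \<le> 1 / (2 * pi) * integral {0..2*pi} f"
proof -
  have "2 * pi * c = integral {0..pi/2} (\<lambda>t. 4 * c)" by simp
  also have "\<dots> \<le> integral {0..pi/2} (\<lambda>t. \<Sum>k<4. f (t + real k * (pi/2)))"
  proof (rule integral_le)
    show "(\<lambda>t. \<Sum>k<4. f (t + real k * (pi/2))) integrable_on {0..pi/2}"
      by (intro integrable_continuous_interval continuous_on_sum continuous_on_compose2[OF f])
        (auto intro: continuous_intros)
    show "4 * c \<le> (\<Sum>k<4. f (t + real k * (pi/2)))" for t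
      using quarters[of t] by (simp add: numeral_eq_Suc algebra_simps)
  qed (intro integrable_continuous_interval continuous_intros)
  also have "\<dots> = integral {0..2*pi} f"
    using integral_Icc_sum_shifts[OF f, of "pi/2" 4] by simp
  finally show ?thesis by (simp add: field_simps)
qed

lemma cont_psh_if_quarter_turns:
  fixes u :: "complex ^ 'n \<Rightarrow> real"
  assumes cont: "continuous_on D u"
    and quarters: "\<And>a v. a \<in> D \<Longrightarrow> a + v \<in> D \<Longrightarrow> a - v \<in> D \<Longrightarrow> a + \<i> *s v \<in> D \<Longrightarrow> a - \<i> *s v \<in> D \<Longrightarrow>
      4 * u a \<le> u (a + v) + u (a - v) + u (a + \<i> *s v) + u (a - \<i> *s v)"
  shows "cont_psh D u"
  unfolding cont_psh_def
proof (intro conjI allI impI)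
  show "continuous_on D u" by (rule cont)
  fix a b assume disc: "\<forall>\<zeta>::complex. norm \<zeta> \<le> 1 \<longrightarrow> a + \<zeta> *s b \<in> D"
  show "u a \<le> 1 / (2 * pi) * integral {0..2 * pi} (\<lambda>t. u (a + cis t *s b))"
  proof (rule mean_value_ge_if_quarter_sums)
    show "continuous_on UNIV (\<lambda>t. u (a + cis t *s b))"
      by (rule continuous_on_compose2[OF cont continuous_on_cis_vector_smult]) (use disc in auto)
    fix t
    have "4 * u a \<le> u (a + cis t *s b) + u (a - cis t *s b)
        + u (a + \<i> *s (cis t *s b)) + u (a - \<i> *s (cis t *s b))"
    proof (rule quarters)
      show "a \<in> D" using disc[rule_format, of 0] by simp
      show "a + cis t *s b \<in> D" "a + \<i> *s (cis t *s b) \<in> D"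
        using disc[rule_format, of "cis t"] disc[rule_format, of "\<i> * cis t"]
        by (simp_all add: vector_smult_assoc norm_mult)
      show "a - cis t *s b \<in> D" "a - \<i> *s (cis t *s b) \<in> D"
        using disc[rule_format, of "- cis t"] disc[rule_format, of "- (\<i> * cis t)"]
        by (simp_all add: vector_smult_assoc vector_smult_lneg norm_mult)
    qed
    then show "4 * u a \<le> u (a + cis t *s b) + u (a + cis (t + pi/2) *s b) + u (a + cis (t + pi) *s b)
        + u (a + cis (t + 3*pi/2) *s b)"
      by (simp add: cis_add_pi_half cis_add_pi cis_add_three_pi_half vector_smult_assoc vector_smult_lneg)
  qed
qed

lemma orthogonal_transformation_isometry_diff:
  fixes B :: "'a::real_inner \<Rightarrow> 'a"
  assumes "\<forall>x y. dist (B x) (B y) = dist x y"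
  shows "orthogonal_transformation (\<lambda>x. B x - B 0)"
  using assms by (simp add: orthogonal_transformation_isometry dist_norm)

lemma continuous_on_isometry:
  assumes "\<forall>x y. dist (B x) (B y) = dist x y"
  shows "continuous_on S B"
  by (rule lipschitz_on_continuous_on[where L=1]) (simp add: lipschitz_onI assms)

lemma isometry_image_eq_vimage:
  fixes A :: "'a::euclidean_space \<Rightarrow> 'a"
  assumes iso: "\<forall>x y. dist (A x) (A y) = dist x y"
  obtains B where "\<forall>x y. dist (B x) (B y) = dist x y" "A ` S = B -` S"
proof
  have "surj (\<lambda>x. A x - A 0)"
    by (rule orthogonal_transformation_surj[OF orthogonal_transformation_isometry_diff[OF iso]])
  then have surj: "surj A" by (metis (no_types, lifting) diff_add_cancel surj_def)
  have inj: "inj A" using iso by (metis dist_eq_0_iff injI)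
  show "\<forall>x y. dist (inv A x) (inv A y) = dist x y"
    using iso surj by (metis surj_f_inv_f)
  show "A ` S = inv A -` S"
    using inj surj by (auto simp: image_iff surj_f_inv_f) (metis surj_f_inv_f)
qed

lemma cont_psh_vimage_isometry:
  fixes B :: "complex ^ 'n \<Rightarrow> complex ^ 'n"
  assumes iso: "\<forall>x y. dist (B x) (B y) = dist x y"
    and cont: "continuous_on D \<phi>" and four: "four_point_subharmonic D \<phi>"
  shows "cont_psh (B -` D) (\<phi> \<circ> B)"
proof (rule cont_psh_if_quarter_turns)
  show "continuous_on (B -` D) (\<phi> \<circ> B)"
    by (rule continuous_on_compose[OF continuous_on_isometry[OF iso]])
      (use cont in \<open>simp add: image_subset_iff continuous_on_subset\<close>)
  define L where "L = (\<lambda>x. B x - B 0)"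
  have L: "orthogonal_transformation L"
    unfolding L_def by (rule orthogonal_transformation_isometry_diff[OF iso])
  then have lin: "linear L" by (simp add: orthogonal_transformation_def)
  have B: "B (a + v) = B a + L v" "B (a - v) = B a - L v" for a v
    using linear_add[OF lin, of a v] linear_diff[OF lin, of a v] by (simp_all add: L_def algebra_simps)
  fix a v
  have orth: "L v \<bullet> L (\<i> *s v) = 0"
    using L by (simp add: orthogonal_transformation_def inner_vector_smult_ii)
  have eq: "norm (L v) = norm (L (\<i> *s v))"
    using L by (simp add: orthogonal_transformation_norm norm_vector_smult_complex)
  assume "a + v \<in> B -` D" "a - v \<in> B -` D" "a + \<i> *s v \<in> B -` D" "a - \<i> *s v \<in> B -` D"
  then show "4 * (\<phi> \<circ> B) a \<le> (\<phi> \<circ> B) (a + v) + (\<phi> \<circ> B) (a - v)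
      + (\<phi> \<circ> B) (a + \<i> *s v) + (\<phi> \<circ> B) (a - \<i> *s v)"
    using four[unfolded four_point_subharmonic_def, rule_format,
        where p = "B a" and v = "L v" and w = "L (\<i> *s v)"] orth eq
    by (simp add: B)
qed

lemma pseudoconvex_vimage_isometry:
  fixes B :: "complex ^ 'n \<Rightarrow> complex ^ 'n"
  assumes iso: "\<forall>x y. dist (B x) (B y) = dist x y"
    and "open D" and "continuous_on D \<phi>" and "four_point_subharmonic D \<phi>"
    and sublevel: "\<And>c. compact {x \<in> D. \<phi> x \<le> c}"
  shows "pseudoconvex (B -` D)"
  unfolding pseudoconvex_def
proof (intro conjI exI allI)
  show "open (B -` D)" by (intro open_vimage assms continuous_on_isometry[OF iso])
  show "cont_psh (B -` D) (\<phi> \<circ> B)" by (rule cont_psh_vimage_isometry[OF assms(1,3,4)])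
  fix c
  obtain M where M: "\<And>x. x \<in> D \<Longrightarrow> \<phi> x \<le> c \<Longrightarrow> norm x \<le> M"
    using compact_imp_bounded[OF sublevel[of c]] by (auto simp: bounded_iff)
  have "{z \<in> B -` D. (\<phi> \<circ> B) z \<le> c} = B -` {x \<in> D. \<phi> x \<le> c}" by auto
  moreover have "closed (B -` {x \<in> D. \<phi> x \<le> c})"
    by (intro closed_vimage compact_imp_closed sublevel continuous_on_isometry[OF iso])
  moreover have "norm z \<le> M + norm (B 0)" if "z \<in> B -` {x \<in> D. \<phi> x \<le> c}" for z
  proof -
    have "norm z = norm (B z - B 0)" using iso by (metis dist_0_norm dist_norm dist_commute)
    also have "\<dots> \<le> norm (B z) + norm (B 0)" by (rule norm_triangle_ineq4)
    finally show ?thesis using M that by fastforce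
  qed
  ultimately show "compact {z \<in> B -` D. (\<phi> \<circ> B) z \<le> c}"
    by (metis (no_types, lifting) bounded_iff compact_eq_bounded_closed)
qed

theorem proposition3p2:
  assumes "CARD('n::finite) \<ge> 2"
  shows "\<exists>D :: (complex ^ 'n) set. domain D \<and> \<not> convex D \<and>
           (\<forall>A :: complex ^ 'n \<Rightarrow> complex ^ 'n.
              (\<forall>x y. dist (A x) (A y) = dist x y) \<longrightarrow> pseudoconvex (A ` D))"
proof -
  obtain j :: 'n where True by blast
  define e :: "complex ^ 'n" where "e = axis j 1"
  have e: "norm e = 1" "norm (axis j \<i>) = 1" "e \<bullet> axis j \<i> = 0"
    by (simp_all add: e_def norm_eq_sqrt_inner inner_axis_axis inner_complex_def)
  let ?D = "{x. hyperbolic_form e x < 1}"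
  have "pseudoconvex (A ` ?D)" if iso: "\<forall>x y. dist (A x) (A y) = dist x y"
    for A :: "complex ^ 'n \<Rightarrow> complex ^ 'n"
  proof -
    obtain B where B: "\<forall>x y. dist (B x) (B y) = dist x y" and AD: "A ` ?D = B -` ?D"
      by (rule isometry_image_eq_vimage[OF iso])
    show ?thesis
      unfolding AD
      by (rule pseudoconvex_vimage_isometry[OF B open_hyperbolic_domain continuous_on_hyperbolic_exhaustion
            four_point_subharmonic_hyperbolic_exhaustion[OF e(1)] compact_sublevel_hyperbolic_exhaustion])
  qed
  moreover have "domain ?D"
    unfolding domain_def using open_hyperbolic_domain connected_hyperbolic_domain
    by (auto simp: hyperbolic_form_def intro!: exI[of _ 0])
  ultimately show ?thesis
    using not_convex_hyperbolic_domain[OF e] by blast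
qed

end
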